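(* Let $n\in\mathbb N$, $a_k=k/(n+1)$ for $0\le k\le n+1$, and $g_n(x)=\sum_{k=0}^n\binom nk(-1)^k\chi_{(a_k,a_{k+1})}(x)$. Define $G_n(x)=\int_0^x\cdots\int_0^{x_{i+1}}\cdots\int_0^{x_2}g_n(x_1)\,dx_1\ldots dx_i\ldots dx_n$ (the $n$-fold iterated integral of $g_n$ from $0$). Then $G_n\in C^{n-1}([0,1])$, $G_n(x)=O(x^n)$ as $x\to0^+$, $G_n(x)=O((x-1)^n)$ as $x\to1^-$, and $G_n>0$ on $(0,1)$.
   Context: $\chi_{(a,b)}$ denotes the indicator function of the interval $(a,b)$. *)

theory Defs
  imports "HOL-Analysis.Analysis" "HOL-Library.Landau_Symbols"
begin

definition node :: "nat \<Rightarrow> nat \<Rightarrow> real" where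
  "node n k = real k / real (n + 1)"

definition gfun :: "nat \<Rightarrow> real \<Rightarrow> real" where
  "gfun n x = (\<Sum>k\<le>n. real (n choose k) * (-1) ^ k *
                  indicator {node n k<..<node n (Suc k)} x)"

fun iter_int :: "nat \<Rightarrow> (real \<Rightarrow> real) \<Rightarrow> real \<Rightarrow> real" where
  "iter_int 0 f = f"
| "iter_int (Suc m) f = (\<lambda>x. integral {0..x} (iter_int m f))"

definition Gfun :: "nat \<Rightarrow> real \<Rightarrow> real" where
  "Gfun n = iter_int n (gfun n)"

definition Ck_on :: "nat \<Rightarrow> real set \<Rightarrow> (real \<Rightarrow> real) \<Rightarrow> bool" where
  "Ck_on k S f \<longleftrightarrow>
     (\<exists>D :: nat \<Rightarrow> real \<Rightarrow> real.
        (\<forall>x\<in>S. D 0 x = f x) \<and>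
        (\<forall>j\<le>k. continuous_on S (D j)) \<and>
        (\<forall>j<k. \<forall>x\<in>S. (D j has_real_derivative D (Suc j) x) (at x within S)))"

end

theory Submission
  imports Defs
begin

text \<open>
  Integrating each indicator \<open>m\<close> times turns \<open>g\<^sub>n\<close> into a combination of truncated powers
  \<open>(x - a\<^sub>k)\<^sub>+\<^sup>m / m!\<close>; for \<open>m = n\<close> a summation by parts collapses it to
  \<open>\<Sum>\<^sub>j (-1)\<^sup>j (n+1 choose j) (x - j h)\<^sub>+\<^sup>n / n!\<close> with \<open>h = 1/(n+1)\<close>, i.e. the
  \<open>(n+1)\<close>-st backward difference of \<open>x\<^sub>+\<^sup>n\<close>: a cardinal B-spline of degree \<open>n\<close> supported
  on \<open>[0,1]\<close>. Its regularity comes from being an \<open>n\<close>-fold integral of a step function,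
  while the Cox--de Boor recurrence expresses it as a positive combination of two shifted
  B-splines of degree \<open>n - 1\<close>; induction then gives positivity inside the support and the
  explicit values \<open>x\<^sup>n/n!\<close> and \<open>(1-x)\<^sup>n/n!\<close> on the extreme knot intervals.
\<close>

definition trunc_pow :: "nat \<Rightarrow> real \<Rightarrow> real \<Rightarrow> real" where
  "trunc_pow m a x = (if x \<le> a then 0 else (x - a) ^ m)"

lemma trunc_pow_mult_var: "x * trunc_pow m a x = trunc_pow (Suc m) a x + a * trunc_pow m a x"
  by (simp add: trunc_pow_def algebra_simps)

lemma trunc_pow_shift: "trunc_pow m a (x - h) = trunc_pow m (a + h) x"
  by (simp add: trunc_pow_def algebra_simps)

lemma trunc_pow_Suc_eq_max: "trunc_pow (Suc m) a = (\<lambda>x. (max (x - a) 0) ^ Suc m)"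
  by (auto simp: trunc_pow_def fun_eq_iff max_def)

lemma continuous_on_trunc_pow_Suc: "continuous_on A (trunc_pow (Suc m) a)"
  unfolding trunc_pow_Suc_eq_max by (intro continuous_intros)

lemma trunc_pow_Suc_has_real_derivative:
  assumes "t \<noteq> a"
  shows "(trunc_pow (Suc m) a has_real_derivative real (Suc m) * trunc_pow m a t) (at t)"
proof (cases "t < a")
  case True
  have "((\<lambda>_. 0) has_real_derivative 0) (at t)" by simp
  then have "(trunc_pow (Suc m) a has_real_derivative 0) (at t)"
    by (rule has_field_derivative_transform_within_open[of _ _ _ "{..<a}"])
       (use True in \<open>auto simp: trunc_pow_def\<close>)
  then show ?thesis using True by (simp add: trunc_pow_def)
next
  case False
  then have "a < t" using assms by simp
  have "((\<lambda>x. x - a) has_real_derivative 1) (at t)"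
    by (auto intro!: derivative_eq_intros)
  from DERIV_power[OF this, of "Suc m"]
  have "((\<lambda>x. (x - a) ^ Suc m) has_real_derivative real (Suc m) * (t - a) ^ m) (at t)"
    by simp
  then have "(trunc_pow (Suc m) a has_real_derivative real (Suc m) * (t - a) ^ m) (at t)"
    by (rule has_field_derivative_transform_within_open[of _ _ _ "{a<..}"])
       (use \<open>a < t\<close> in \<open>auto simp: trunc_pow_def\<close>)
  then show ?thesis using \<open>a < t\<close> by (simp add: trunc_pow_def)
qed

lemma sum_binomial_alternating_differences:
  fixes f :: "nat \<Rightarrow> real"
  shows "(\<Sum>k\<le>m. real (m choose k) * (-1) ^ k * (f k - f (Suc k)))
       = (\<Sum>j\<le>Suc m. (-1) ^ j * real (Suc m choose j) * f j)"
proof -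
  have shift: "(\<Sum>j\<le>Suc m. (-1) ^ j * real (m choose j) * f j)
      = f 0 + (\<Sum>j\<le>m. (-1) ^ Suc j * real (m choose Suc j) * f (Suc j))"
    by (subst sum.atMost_Suc_shift) simp
  have "(\<Sum>j\<le>Suc m. (-1) ^ j * real (Suc m choose j) * f j)
      = f 0 + (\<Sum>j\<le>m. (-1) ^ Suc j * real (m choose j) * f (Suc j))
        + (\<Sum>j\<le>m. (-1) ^ Suc j * real (m choose Suc j) * f (Suc j))"
    by (subst sum.atMost_Suc_shift) (simp add: sum.distrib[symmetric] algebra_simps)
  also have "(\<Sum>j\<le>m. (-1) ^ Suc j * real (m choose Suc j) * f (Suc j))
      = (\<Sum>j\<le>Suc m. (-1) ^ j * real (m choose j) * f j) - f 0"
    using shift by simp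
  also have "(\<Sum>j\<le>Suc m. (-1) ^ j * real (m choose j) * f j)
      = (\<Sum>j\<le>m. (-1) ^ j * real (m choose j) * f j)"
    by simp
  finally show ?thesis
    by (simp add: sum_subtractf algebra_simps sum_negf)
qed

lemma sum_binomial_alternating_telescope:
  fixes g :: "nat \<Rightarrow> real"
  shows "(\<Sum>j\<le>Suc m. (-1) ^ j * real (Suc m choose j) *
            (real j * g j + (real m + 1 - real j) * g (Suc j))) = 0"
proof -
  have absorb: "real (Suc m choose Suc i) * (real i + 1)
      = real (Suc m choose i) * (real m + 1 - real i)" if "i \<le> m" for i
  proof -
    have "(Suc m choose Suc i) * Suc i = (Suc m - i) * (Suc m choose i)"
      using Suc_times_binomial_eq[of m i] binomial_absorb_comp[of "Suc m" i] by simp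
    then show ?thesis
      using that by (metis of_nat_Suc of_nat_diff of_nat_mult le_SucI
          add.commute mult.commute)
  qed
  have "(\<Sum>j\<le>Suc m. (-1) ^ j * real (Suc m choose j) * (real j * g j))
      = (\<Sum>i\<le>m. (-1) ^ Suc i * (real (Suc m choose Suc i) * (real i + 1)) * g (Suc i))"
    by (subst sum.atMost_Suc_shift) (simp add: algebra_simps)
  also have "\<dots> = - (\<Sum>i\<le>m. (-1) ^ i * real (Suc m choose i) * ((real m + 1 - real i) * g (Suc i)))"
    by (simp add: absorb sum_negf[symmetric] del: binomial_Suc_Suc) (simp add: ac_simps)
  also have "\<dots> = - (\<Sum>j\<le>Suc m. (-1) ^ j * real (Suc m choose j) * ((real m + 1 - real j) * g (Suc j)))"
    by simp
  finally show ?thesis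
    by (simp add: distrib_left sum.distrib)
qed

text \<open>
  \<open>bspline m h\<close> is \<open>m! h\<^sup>m\<close> times the cardinal B-spline of degree \<open>m\<close> with knots
  \<open>0, h, \<dots>, (m+1) h\<close>.
\<close>
definition bspline :: "nat \<Rightarrow> real \<Rightarrow> real \<Rightarrow> real" where
  "bspline m h x = (\<Sum>j\<le>Suc m. (-1) ^ j * real (Suc m choose j) * trunc_pow m (real j * h) x)"

lemma bspline_Suc:
  "bspline (Suc m) h x = x * bspline m h x + ((real m + 2) * h - x) * bspline m h (x - h)"
proof -
  let ?t = "\<lambda>k j. trunc_pow k (real j * h) x"
  have termwise: "x * ?t m j + ((real m + 2) * h - x) * ?t m (Suc j)
      = (?t (Suc m) j - ?t (Suc m) (Suc j)) + h * (real j * ?t m j + (real m + 1 - real j) * ?t m (Suc j))"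
    for j
    using trunc_pow_mult_var[of x m "real j * h"] trunc_pow_mult_var[of x m "real (Suc j) * h"]
    by (simp add: algebra_simps)
  have "x * bspline m h x + ((real m + 2) * h - x) * bspline m h (x - h)
      = (\<Sum>j\<le>Suc m. (-1) ^ j * real (Suc m choose j) *
          (x * ?t m j + ((real m + 2) * h - x) * ?t m (Suc j)))"
    unfolding bspline_def trunc_pow_shift
    by (simp add: sum_distrib_left sum.distrib[symmetric] algebra_simps)
  also have "\<dots> = (\<Sum>j\<le>Suc m. real (Suc m choose j) * (-1) ^ j * (?t (Suc m) j - ?t (Suc m) (Suc j))
      + h * ((-1) ^ j * real (Suc m choose j) *
              (real j * ?t m j + (real m + 1 - real j) * ?t m (Suc j))))"
    by (rule sum.cong[OF refl], subst termwise, simp add: algebra_simps)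
  also have "\<dots> = (\<Sum>j\<le>Suc m. real (Suc m choose j) * (-1) ^ j * (?t (Suc m) j - ?t (Suc m) (Suc j)))
      + h * (\<Sum>j\<le>Suc m. (-1) ^ j * real (Suc m choose j) *
              (real j * ?t m j + (real m + 1 - real j) * ?t m (Suc j)))"
    by (simp only: sum.distrib sum_distrib_left)
  also have "\<dots> = bspline (Suc m) h x"
    by (simp only: sum_binomial_alternating_differences[of "Suc m" "?t (Suc m)"]
        sum_binomial_alternating_telescope[of m "?t m"] bspline_def)
  finally show ?thesis by simp
qed

lemma bspline_0: "0 < h \<Longrightarrow> bspline 0 h x = (if 0 < x \<and> x \<le> h then 1 else 0)"
  by (simp add: bspline_def trunc_pow_def)

lemma bspline_eq_0_nonpos: "0 \<le> h \<Longrightarrow> x \<le> 0 \<Longrightarrow> bspline m h x = 0"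
  unfolding bspline_def trunc_pow_def
  by (intro sum.neutral ballI) (auto intro: order_trans[of x 0])

lemma bspline_eq_0_beyond: "0 < h \<Longrightarrow> real (Suc m) * h < x \<Longrightarrow> bspline m h x = 0"
proof (induction m arbitrary: x)
  case 0
  then show ?case by (simp add: bspline_0)
next
  case (Suc m)
  then have "bspline m h x = 0" "bspline m h (x - h) = 0"
    by (auto intro!: Suc.IH simp: algebra_simps)
  then show ?case by (simp add: bspline_Suc)
qed

lemma bspline_first_interval: "0 < h \<Longrightarrow> 0 < x \<Longrightarrow> x < h \<Longrightarrow> bspline m h x = x ^ m"
proof (induction m)
  case 0
  then show ?case by (simp add: bspline_0)
next
  case (Suc m)
  then have "bspline m h (x - h) = 0" by (intro bspline_eq_0_nonpos) auto
  then show ?case using Suc by (simp add: bspline_Suc)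
qed

lemma bspline_last_interval:
  "0 < h \<Longrightarrow> real m * h < x \<Longrightarrow> x < real (Suc m) * h
    \<Longrightarrow> bspline m h x = (real (Suc m) * h - x) ^ m"
proof (induction m arbitrary: x)
  case 0
  then show ?case by (simp add: bspline_0)
next
  case (Suc m)
  have "bspline m h x = 0"
    using Suc.prems by (intro bspline_eq_0_beyond) (auto simp: algebra_simps)
  moreover have "bspline m h (x - h) = (real (Suc m) * h - (x - h)) ^ m"
    using Suc.prems by (intro Suc.IH) (auto simp: algebra_simps)
  ultimately show ?case by (simp add: bspline_Suc algebra_simps)
qed

lemma bspline_nonneg: "0 < h \<Longrightarrow> 0 \<le> bspline m h x"
proof (induction m arbitrary: x)
  case 0
  then show ?case by (simp add: bspline_0)
next
  case (Suc m)
  consider "x \<le> 0" | "0 < x" "x \<le> (real m + 2) * h" | "(real m + 2) * h < x" by linarith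
  then show ?case
  proof cases
    case 1
    then show ?thesis using Suc.prems by (simp add: bspline_eq_0_nonpos)
  next
    case 2
    then show ?thesis using Suc by (simp add: bspline_Suc)
  next
    case 3
    then show ?thesis using Suc.prems by (simp add: bspline_eq_0_beyond algebra_simps)
  qed
qed

text \<open>
  In the recurrence both weights are positive inside the support, and at every such point
  one of the two shifted splines is positive, except at \<open>x = h\<close> for \<open>m = 0\<close>, where the
  closed right end of \<open>(0, h]\<close> takes over.
\<close>
lemma bspline_pos: "0 < h \<Longrightarrow> 0 < x \<Longrightarrow> x < real (Suc m) * h \<Longrightarrow> 0 < bspline m h x"
proof (induction m arbitrary: x)
  case 0
  then show ?case by (simp add: bspline_0)
next
  case (Suc m)
  have weight: "0 < (real m + 2) * h - x" using Suc.prems by (simp add: algebra_simps)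
  have left: "0 \<le> x * bspline m h x" and right: "0 \<le> ((real m + 2) * h - x) * bspline m h (x - h)"
    using Suc.prems weight bspline_nonneg[of h m] by simp_all
  have "m = 0 \<and> x = h" if "\<not> x < real (Suc m) * h" "\<not> 0 < x - h"
  proof -
    have "real m * h \<le> 0" using that by (simp add: algebra_simps)
    then have "m = 0" using Suc.prems(1) by (simp add: mult_le_0_iff)
    then show ?thesis using that by simp
  qed
  then consider "x < real (Suc m) * h" | "0 < x - h" | "m = 0" "x = h" by blast
  then show ?case
  proof cases
    case 1
    then have "0 < x * bspline m h x" using Suc by simp
    then show ?thesis using right by (simp add: bspline_Suc)
  next
    case 2
    then have "0 < bspline m h (x - h)"
      using Suc by (intro Suc.IH) (simp_all add: algebra_simps)
    with weight have "0 < ((real m + 2) * h - x) * bspline m h (x - h)" by simp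
    then show ?thesis using left by (simp add: bspline_Suc)
  next
    case 3
    then show ?thesis using Suc.prems right by (simp add: bspline_Suc bspline_0)
  qed
qed

text \<open>The closed form of \<open>iter_int m (gfun n)\<close> on \<open>[0, \<infinity>)\<close>, valid for \<open>m \<ge> 1\<close>.\<close>
definition gfun_primitive :: "nat \<Rightarrow> nat \<Rightarrow> real \<Rightarrow> real" where
  "gfun_primitive n m x = (\<Sum>k\<le>n. real (n choose k) * (-1) ^ k *
      (trunc_pow m (node n k) x - trunc_pow m (node n (Suc k)) x)) / fact m"

lemma node_nonneg: "0 \<le> node n k"
  by (simp add: node_def)

lemma node_strict_mono: "k < k' \<Longrightarrow> node n k < node n k'"
  by (simp add: node_def divide_strict_right_mono)

lemma continuous_on_gfun_primitive: "continuous_on A (gfun_primitive n (Suc m))"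
  unfolding gfun_primitive_def by (intro continuous_intros continuous_on_trunc_pow_Suc) auto

lemma gfun_primitive_has_real_derivative:
  assumes "t \<notin> node n ` {..Suc n}"
  shows "(gfun_primitive n (Suc m) has_real_derivative gfun_primitive n m t) (at t)"
proof -
  let ?d = "\<lambda>k. trunc_pow m (node n k) t - trunc_pow m (node n (Suc k)) t"
  have "((\<lambda>x. \<Sum>k\<le>n. real (n choose k) * (-1) ^ k *
          (trunc_pow (Suc m) (node n k) x - trunc_pow (Suc m) (node n (Suc k)) x))
      has_real_derivative (\<Sum>k\<le>n. real (n choose k) * (-1) ^ k * (real (Suc m) * ?d k))) (at t)"
    unfolding right_diff_distrib
  proof (intro DERIV_sum DERIV_cmult DERIV_diff trunc_pow_Suc_has_real_derivative)
    fix k assume "k \<in> {..n}"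
    then show "t \<noteq> node n k" "t \<noteq> node n (Suc k)" using assms by auto
  qed
  from DERIV_cdivide[OF this, of "fact (Suc m)"]
  have "(gfun_primitive n (Suc m) has_real_derivative
      real (Suc m) * (\<Sum>k\<le>n. real (n choose k) * (-1) ^ k * ?d k) / (real (Suc m) * fact m)) (at t)"
    unfolding sum_distrib_left gfun_primitive_def fact_Suc by (simp only: mult_ac)
  then show ?thesis
    unfolding gfun_primitive_def by (subst (asm) mult_divide_mult_cancel_left) simp_all
qed

lemma gfun_eq_gfun_primitive_0:
  assumes "t \<notin> node n ` {..Suc n}"
  shows "gfun n t = gfun_primitive n 0 t"
  unfolding gfun_def gfun_primitive_def fact_0 div_by_1
proof (rule sum.cong[OF refl])
  fix k assume "k \<in> {..n}"
  then have "t \<noteq> node n (Suc k)" using assms by auto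
  moreover have "node n k < node n (Suc k)" by (simp add: node_strict_mono)
  ultimately have "indicator {node n k<..<node n (Suc k)} t
      = trunc_pow 0 (node n k) t - trunc_pow 0 (node n (Suc k)) t"
    by (auto simp: trunc_pow_def indicator_def)
  then show "real (n choose k) * (-1) ^ k * indicator {node n k<..<node n (Suc k)} t
      = real (n choose k) * (-1) ^ k * (trunc_pow 0 (node n k) t - trunc_pow 0 (node n (Suc k)) t)"
    by simp
qed

lemma gfun_primitive_has_integral:
  assumes "0 \<le> x" and f: "\<And>t. t \<in> {0..x} - node n ` {..Suc n} \<Longrightarrow> f t = gfun_primitive n m t"
  shows "(f has_integral gfun_primitive n (Suc m) x) {0..x}"
proof -
  have "(gfun_primitive n m has_integral gfun_primitive n (Suc m) x - gfun_primitive n (Suc m) 0) {0..x}"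
  proof (rule fundamental_theorem_of_calculus_strong[of "node n ` {..Suc n}"])
    fix t assume "t \<in> {0..x} - node n ` {..Suc n}"
    then show "(gfun_primitive n (Suc m) has_vector_derivative gfun_primitive n m t) (at t)"
      by (simp add: gfun_primitive_has_real_derivative flip: has_real_derivative_iff_has_vector_derivative)
  qed (use \<open>0 \<le> x\<close> continuous_on_gfun_primitive in auto)
  moreover have "gfun_primitive n (Suc m) 0 = 0"
    using node_nonneg by (simp add: gfun_primitive_def trunc_pow_def)
  ultimately show ?thesis
    by (intro has_integral_spike_finite[of "node n ` {..Suc n}" _ f "gfun_primitive n m"])
       (use f in auto)
qed

lemma iter_int_gfun: "0 \<le> x \<Longrightarrow> iter_int (Suc m) (gfun n) x = gfun_primitive n (Suc m) x"
proof (induction m arbitrary: x)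
  case 0
  have "(gfun n has_integral gfun_primitive n (Suc 0) x) {0..x}"
    by (rule gfun_primitive_has_integral) (use 0 gfun_eq_gfun_primitive_0 in auto)
  then show ?case by (simp add: integral_unique)
next
  case (Suc m)
  have "(iter_int (Suc m) (gfun n) has_integral gfun_primitive n (Suc (Suc m)) x) {0..x}"
    by (rule gfun_primitive_has_integral) (use Suc in auto)
  then show ?case by (simp add: integral_unique)
qed

lemma Gfun_eq_bspline:
  assumes "n \<ge> 1" "0 \<le> x"
  shows "Gfun n x = bspline n (1 / real (Suc n)) x / fact n"
proof -
  have node: "node n j = real j * (1 / real (Suc n))" for j by (simp add: node_def)
  have "gfun_primitive n n x = bspline n (1 / real (Suc n)) x / fact n"
    unfolding gfun_primitive_def bspline_def node[symmetric]
    by (simp only: sum_binomial_alternating_differences[of n "\<lambda>k. trunc_pow n (node n k) x"])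
  moreover have "Gfun n x = gfun_primitive n n x"
    using assms iter_int_gfun[of x "n - 1" n] by (simp add: Gfun_def)
  ultimately show ?thesis by simp
qed

lemma Ck_on_iter_int:
  assumes "\<And>m. continuous_on {0..b} (iter_int (Suc m) f)"
  shows "Ck_on k {0..b} (iter_int (Suc k) f)"
  unfolding Ck_on_def
proof (intro exI[of _ "\<lambda>j. iter_int (Suc k - j) f"] conjI allI impI ballI)
  fix j assume "j \<le> k"
  then show "continuous_on {0..b} (iter_int (Suc k - j) f)"
    using assms[of "k - j"] by (simp add: Suc_diff_le)
next
  fix j x assume "j < k" "x \<in> {0..b}"
  then have "Suc k - j = Suc (Suc (k - Suc j))" "Suc k - Suc j = Suc (k - Suc j)" by auto
  then show "(iter_int (Suc k - j) f has_real_derivative iter_int (Suc k - Suc j) f x) (at x within {0..b})"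
    using integral_has_real_derivative[OF assms \<open>x \<in> {0..b}\<close>] by simp
qed simp

lemma Ck_on_Gfun:
  assumes "n \<ge> 1"
  shows "Ck_on (n - 1) {0..1} (Gfun n)"
proof -
  have "continuous_on {0..1} (iter_int (Suc m) (gfun n))" for m
    by (rule continuous_on_eq[OF continuous_on_gfun_primitive[of _ n m]])
       (simp add: iter_int_gfun del: iter_int.simps)
  then have "Ck_on (n - 1) {0..1} (iter_int (Suc (n - 1)) (gfun n))"
    by (rule Ck_on_iter_int)
  then show ?thesis
    using assms by (simp add: Gfun_def del: iter_int.simps)
qed

lemma Gfun_bigo_at_right_0:
  assumes "n \<ge> 1"
  shows "Gfun n \<in> O[at_right 0](\<lambda>x. x ^ n)"
proof -
  have "\<forall>\<^sub>F x in at_right 0. Gfun n x = x ^ n / fact n"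
  proof (rule eventually_at_rightI[of 0 "1 / real (Suc n)"])
    fix x assume "x \<in> {0<..<1 / real (Suc n)}"
    then show "Gfun n x = x ^ n / fact n"
      using Gfun_eq_bspline[OF assms, of x] bspline_first_interval[of "1 / real (Suc n)" x n] by simp
  qed simp
  then show ?thesis by (rule landau_o.big.in_cong[THEN iffD2]) simp
qed

lemma Gfun_bigo_at_left_1:
  assumes "n \<ge> 1"
  shows "Gfun n \<in> O[at_left 1](\<lambda>x. (x - 1) ^ n)"
proof -
  have "\<forall>\<^sub>F x in at_left 1. Gfun n x = (-1) ^ n * (x - 1) ^ n / fact n"
  proof (rule eventually_at_leftI[of "real n / real (Suc n)"])
    fix x assume x: "x \<in> {real n / real (Suc n)<..<1}"
    then have "bspline n (1 / real (Suc n)) x = (1 - x) ^ n"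
      by (subst bspline_last_interval) simp_all
    moreover have "(1 - x) ^ n = (-1) ^ n * (x - 1) ^ n"
      by (metis power_mult_distrib minus_diff_eq mult_minus1)
    moreover have "0 \<le> x"
    proof -
      have "real n / real (Suc n) < x" "0 \<le> real n / real (Suc n)" using x by simp_all
      then show ?thesis by linarith
    qed
    ultimately show "Gfun n x = (-1) ^ n * (x - 1) ^ n / fact n"
      using assms by (simp add: Gfun_eq_bspline)
  qed simp
  then show ?thesis by (rule landau_o.big.in_cong[THEN iffD2]) simp
qed

lemma Gfun_pos: "n \<ge> 1 \<Longrightarrow> 0 < x \<Longrightarrow> x < 1 \<Longrightarrow> 0 < Gfun n x"
  by (simp add: Gfun_eq_bspline bspline_pos)

theorem lemma6p4:
  fixes n :: nat
  assumes "n \<ge> 1"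
  shows "Ck_on (n - 1) {0..1} (Gfun n)
       \<and> Gfun n \<in> O[at_right 0](\<lambda>x. x ^ n)
       \<and> Gfun n \<in> O[at_left 1](\<lambda>x. (x - 1) ^ n)
       \<and> (\<forall>x\<in>{0<..<1}. Gfun n x > 0)"
  using assms Ck_on_Gfun Gfun_bigo_at_right_0 Gfun_bigo_at_left_1 Gfun_pos by auto

end
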